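(* Let $S$ be a finite set and let $\{A_1,\dots,A_k\}\subseteq M_S([0,\infty))$ be an irreducible family of nonzero pairwise commuting matrices. Let $F\subseteq\mathbb{N}^k$ be a finite set with $A_F(s,t)>0$ for all $s,t\in S$, and let $x$ be the unimodular Perron-Frobenius eigenvector of $A_F$. Then: (1)(a) $x$ is the unique non-negative vector of unit $1$-norm that is a common eigenvector of all the $A_i$; (b) $A_ix=\rho(A_i)x$ for each $i$, and each $\rho(A_i)>0$; (c) if $z\in\mathbb{C}^S$ and $A_iz=\rho(A_i)z$ for all $i$, then $z\in\mathbb{C}x$. (2) Suppose $y\in[0,\infty)^S$ is nonzero and $\lambda\in[0,\infty)^k$ satisfies $A_iy\le\lambda_iy$ (entrywise) for all $i$. (a) Then $y_s>0$ for every $s\in S$, and $\lambda_i\ge\rho(A_i)$ for all $i$. (b) If moreover $\lambda_i=\rho(A_i)$ for all $i$ and $y$ has unit $1$-norm, then $y=x$. (3) For $n\in\mathbb{N}^k$, $\rho(A^n)=\prod_{i=1}^k\rho(A_i)^{n_i}>0$.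
   Context: For $n\in\mathbb{N}^k$, $A^n=\prod_iA_i^{n_i}$, and for finite $F\subseteq\mathbb{N}^k$, $A_F=\sum_{n\in F}A^n$. The family $\{A_1,\dots,A_k\}$ is irreducible if each $A_i\neq0$ and there is a finite $F\subseteq\mathbb{N}^k$ with $A_F(s,t)>0$ for all $s,t\in S$. $\rho$ denotes spectral radius. For an irreducible non-negative matrix $B$, its unimodular Perron-Frobenius eigenvector is the unique positive eigenvector with eigenvalue $\rho(B)$ and $1$-norm $1$. *)

theory Defs
  imports "Jordan_Normal_Form.Spectral_Radius"
begin

text \<open>The finite set S is represented as the index set {0..<d} of d x d matrices.
  The family A_1..A_k is represented as A 0, ..., A (k-1).\<close>

definition nvecs :: "nat \<Rightarrow> (nat \<Rightarrow> nat) set" where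
  "nvecs k = {n. \<forall>i\<ge>k. n i = 0}"

definition mpow :: "nat \<Rightarrow> nat \<Rightarrow> (nat \<Rightarrow> real mat) \<Rightarrow> (nat \<Rightarrow> nat) \<Rightarrow> real mat" where
  "mpow d k A n = foldr (\<lambda>i M. (A i ^\<^sub>m n i) * M) [0..<k] (1\<^sub>m d)"

definition msum :: "nat \<Rightarrow> nat \<Rightarrow> (nat \<Rightarrow> real mat) \<Rightarrow> (nat \<Rightarrow> nat) set \<Rightarrow> real mat" where
  "msum d k A F = mat d d (\<lambda>(s,t). \<Sum>n\<in>F. mpow d k A n $$ (s,t))"

definition irreducible_family :: "nat \<Rightarrow> nat \<Rightarrow> (nat \<Rightarrow> real mat) \<Rightarrow> bool" where
  "irreducible_family d k A \<longleftrightarrow> (\<forall>i<k. A i \<noteq> 0\<^sub>m d d) \<and>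
     (\<exists>F. finite F \<and> F \<subseteq> nvecs k \<and> (\<forall>s<d. \<forall>t<d. msum d k A F $$ (s,t) > 0))"

definition rho :: "real mat \<Rightarrow> real" where
  "rho B = spectral_radius (map_mat complex_of_real B)"

definition norm1 :: "real vec \<Rightarrow> real" where
  "norm1 v = (\<Sum>s<dim_vec v. \<bar>v $ s\<bar>)"

definition unimodular_PF_eigenvector :: "real mat \<Rightarrow> real vec \<Rightarrow> bool" where
  "unimodular_PF_eigenvector B x \<longleftrightarrow> x \<in> carrier_vec (dim_row B) \<and>
     (\<forall>s<dim_vec x. x $ s > 0) \<and> B *\<^sub>v x = rho B \<cdot>\<^sub>v x \<and> norm1 x = 1"

end

theory Submission imports Defs begin

text \<open>\<open>A\<^sub>F\<close> is entrywise positive, so the minimum-ratio argument shows that every \<open>u\<close> with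
  \<open>A\<^sub>F u \<le> \<rho>(A\<^sub>F) u\<close> is a multiple of the positive eigenvector \<open>x\<close>.  Each \<open>A\<^sub>i\<close> commutes
  with \<open>A\<^sub>F\<close> and therefore maps this line into itself, so \<open>x\<close> is a common eigenvector.  For a
  nonnegative matrix, a positive (sub-)eigenvector with eigenvalue \<open>c\<close> bounds every complex
  eigenvalue by \<open>c\<close> (compare \<open>|v\<^sub>t|\<close> with \<open>y\<^sub>t\<close> at the index maximising their ratio), so the
  eigenvalue of \<open>x\<close> is the spectral radius.  The remaining claims follow by pushing eigenvector
  and sub-eigenvector relations of the \<open>A\<^sub>i\<close> through the products \<open>A\<^sup>n\<close> and the sum \<open>A\<^sub>F\<close>.\<close>

definition nonneg_mat :: "nat \<Rightarrow> real mat \<Rightarrow> bool" where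
  "nonneg_mat d B \<longleftrightarrow> B \<in> carrier_mat d d \<and> (\<forall>s<d. \<forall>t<d. 0 \<le> B $$ (s,t))"

definition pos_mat :: "nat \<Rightarrow> real mat \<Rightarrow> bool" where
  "pos_mat d P \<longleftrightarrow> P \<in> carrier_mat d d \<and> (\<forall>s<d. \<forall>t<d. 0 < P $$ (s,t))"

lemma pos_mat_imp_nonneg_mat: "pos_mat d P \<Longrightarrow> nonneg_mat d P"
  by (auto simp: pos_mat_def nonneg_mat_def less_imp_le)

lemma ex_lessThan_arg_min:
  fixes f :: "nat \<Rightarrow> 'a::linorder"
  assumes "0 < d"
  obtains s where "s < d" "\<And>t. t < d \<Longrightarrow> f s \<le> f t"
  using ex_is_arg_min_if_finite[of "{..<d}" f] assms by (auto simp: is_arg_min_linorder)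

lemma ex_lessThan_arg_max:
  fixes f :: "nat \<Rightarrow> 'a::linorder"
  assumes "0 < d"
  obtains s where "s < d" "\<And>t. t < d \<Longrightarrow> f t \<le> f s"
proof -
  have "Max (f ` {..<d}) \<in> f ` {..<d}" using assms by (intro Max_in) auto
  then obtain s where "s < d" "f s = Max (f ` {..<d})" by auto
  then show ?thesis by (intro that) auto
qed

lemma less_eq_vec_iff:
  "v \<in> carrier_vec d \<Longrightarrow> w \<in> carrier_vec d \<Longrightarrow> v \<le> w \<longleftrightarrow> (\<forall>s<d. v $ s \<le> w $ s)"
  by (simp add: less_eq_vec_def)

lemma mult_mat_vec_index_sum:
  fixes B :: "'a::comm_semiring_0 mat"
  assumes "B \<in> carrier_mat n d" "v \<in> carrier_vec d" "s < n"
  shows "(B *\<^sub>v v) $ s = (\<Sum>t<d. B $$ (s,t) * v $ t)"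
  using assms by (auto simp: scalar_prod_def atLeast0LessThan intro!: sum.cong)

lemma nonzero_vec_index:
  assumes "v \<in> carrier_vec d" "v \<noteq> 0\<^sub>v d"
  obtains t where "t < d" "v $ t \<noteq> 0"
  using assms that by (metis carrier_vecD eq_vecI index_zero_vec)

lemma norm1_smult: "x \<in> carrier_vec d \<Longrightarrow> norm1 (c \<cdot>\<^sub>v x) = \<bar>c\<bar> * norm1 x"
  unfolding norm1_def by (simp add: abs_mult sum_distrib_left)

lemma nonneg_mat_mult: "nonneg_mat d B \<Longrightarrow> nonneg_mat d C \<Longrightarrow> nonneg_mat d (B * C)"
  unfolding nonneg_mat_def by (auto simp: scalar_prod_def intro!: sum_nonneg)

lemma nonneg_mat_carrier: "nonneg_mat d B \<Longrightarrow> B \<in> carrier_mat d d"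
  by (simp add: nonneg_mat_def)

lemma nonneg_mat_one: "nonneg_mat d (1\<^sub>m d)"
  by (simp add: nonneg_mat_def)

lemma nonneg_mat_mult_vec_mono:
  assumes B: "nonneg_mat d B" and vw: "v \<le> w" and w: "w \<in> carrier_vec d"
  shows "B *\<^sub>v v \<le> B *\<^sub>v w"
proof -
  have v: "v \<in> carrier_vec d" using vw w unfolding less_eq_vec_def carrier_vec_def by simp
  have Bc: "B \<in> carrier_mat d d" using B by (rule nonneg_mat_carrier)
  have "(B *\<^sub>v v) $ s \<le> (B *\<^sub>v w) $ s" if s: "s < d" for s
  proof -
    have "\<forall>t<d. v $ t \<le> w $ t" using vw w by (simp add: less_eq_vec_def)
    then show ?thesis using B s
      unfolding mult_mat_vec_index_sum[OF Bc v s] mult_mat_vec_index_sum[OF Bc w s] nonneg_mat_def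
      by (intro sum_mono mult_left_mono) auto
  qed
  with Bc show ?thesis unfolding less_eq_vec_def by auto
qed

lemma nonneg_mat_nonzero_mult_vec_pos:
  assumes B: "nonneg_mat d B" "B \<noteq> 0\<^sub>m d d" and x: "x \<in> carrier_vec d" "\<forall>t<d. 0 < x $ t"
  obtains s where "s < d" "0 < (B *\<^sub>v x) $ s"
proof -
  have Bc: "B \<in> carrier_mat d d" using B(1) by (rule nonneg_mat_carrier)
  obtain s t where st: "s < d" "t < d" "B $$ (s,t) \<noteq> 0"
    using B(2) Bc by (metis eq_matI carrier_matD index_zero_mat)
  have "0 < B $$ (s,t) * x $ t" using B(1) st x(2) by (simp add: nonneg_mat_def less_le)
  also have "\<dots> \<le> (\<Sum>t<d. B $$ (s,t) * x $ t)"
    by (rule member_le_sum) (use st B(1) x(2) in \<open>auto simp: nonneg_mat_def less_imp_le\<close>)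
  finally have "0 < (B *\<^sub>v x) $ s" unfolding mult_mat_vec_index_sum[OF Bc x(1) st(1)] .
  with st(1) show ?thesis by (rule that)
qed

lemma pos_mat_mult_vec_pos:
  assumes P: "pos_mat d P" and y: "y \<in> carrier_vec d" "\<forall>t<d. 0 \<le> y $ t" "y \<noteq> 0\<^sub>v d"
    and s: "s < d"
  shows "0 < (P *\<^sub>v y) $ s"
proof -
  obtain t where t: "t < d" "y $ t \<noteq> 0" using nonzero_vec_index[OF y(1,3)] .
  have "0 < P $$ (s,t) * y $ t" using P y(2) t s by (simp add: pos_mat_def less_le)
  also have "\<dots> \<le> (\<Sum>t<d. P $$ (s,t) * y $ t)"
    by (rule member_le_sum) (use t P y(2) s in \<open>auto simp: pos_mat_def less_imp_le\<close>)
  moreover have "P \<in> carrier_mat d d" using P by (simp add: pos_mat_def)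
  ultimately show ?thesis by (simp add: mult_mat_vec_index_sum[OF _ y(1) s])
qed

lemma pos_mat_subinvariant_pos:
  assumes P: "pos_mat d P" and y: "y \<in> carrier_vec d" "\<forall>t<d. 0 \<le> y $ t" "y \<noteq> 0\<^sub>v d"
    and sub: "P *\<^sub>v y \<le> c \<cdot>\<^sub>v y" and s: "s < d"
  shows "0 < y $ s"
proof -
  have "0 < (P *\<^sub>v y) $ s" using pos_mat_mult_vec_pos[OF P y s] .
  also have "\<dots> \<le> c * y $ s" using sub s y(1) by (auto simp: less_eq_vec_def)
  finally show ?thesis using y(2) s by (cases "y $ s = 0") auto
qed

lemma pos_mat_subinvariant_collinear:
  assumes P: "pos_mat d P"
    and x: "x \<in> carrier_vec d" "\<forall>t<d. 0 < x $ t" "P *\<^sub>v x = r \<cdot>\<^sub>v x"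
    and w: "w \<in> carrier_vec d" "P *\<^sub>v w \<le> r \<cdot>\<^sub>v w"
  shows "\<exists>c. w = c \<cdot>\<^sub>v x"
proof (cases "d = 0")
  case True
  then show ?thesis using w(1) x(1) by (intro exI[of _ 0] eq_vecI) auto
next
  case False
  have Pc: "P \<in> carrier_mat d d" using P by (simp add: pos_mat_def)
  obtain s where s: "s < d" "\<And>t. t < d \<Longrightarrow> w $ s / x $ s \<le> w $ t / x $ t"
    using ex_lessThan_arg_min[of d "\<lambda>t. w $ t / x $ t"] False by blast
  define c where "c = w $ s / x $ s"
  \<comment> \<open>\<open>g \<ge> 0\<close> vanishes at \<open>s\<close>, while \<open>(P g)\<^sub>s \<le> r g\<^sub>s = 0\<close>;
     positivity of \<open>P\<close> forces \<open>g = 0\<close>\<close>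
  define g where "g = w - c \<cdot>\<^sub>v x"
  have g: "g \<in> carrier_vec d" using w(1) x(1) by (simp add: g_def)
  have g_index: "g $ t = w $ t - c * x $ t" if "t < d" for t
    using that w(1) x(1) by (simp add: g_def)
  have g_nonneg: "\<forall>t<d. 0 \<le> g $ t"
  proof (intro allI impI)
    fix t assume t: "t < d"
    have "c \<le> w $ t / x $ t" using s(2)[OF t] by (simp add: c_def)
    then show "0 \<le> g $ t" using x(2) t by (simp add: g_index le_divide_eq)
  qed
  have "g $ s = 0" using x(2)[rule_format, OF s(1)] s(1) by (simp add: g_index c_def)
  moreover have "(P *\<^sub>v g) $ s = (P *\<^sub>v w) $ s - c * (r * x $ s)"
    using Pc w(1) x s(1) by (simp add: g_def mult_minus_distrib_mat_vec mult_mat_vec)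
  moreover have "(P *\<^sub>v w) $ s \<le> r * w $ s" using w s(1) by (auto simp: less_eq_vec_def)
  ultimately have "(P *\<^sub>v g) $ s \<le> r * g $ s" using s(1) by (simp add: g_index algebra_simps)
  with \<open>g $ s = 0\<close> have "\<not> 0 < (P *\<^sub>v g) $ s" by simp
  then have "g = 0\<^sub>v d" using pos_mat_mult_vec_pos[OF P g g_nonneg _ s(1)] by blast
  then have "w $ t = c * x $ t" if "t < d" for t using g_index[OF that] that by simp
  then have "w = c \<cdot>\<^sub>v x" using w(1) x(1) by (intro eq_vecI) auto
  then show ?thesis ..
qed

lemma rho_ge_eigenvalue:
  assumes B: "B \<in> carrier_mat d d" and v: "eigenvector (map_mat complex_of_real B) v e"
  shows "norm e \<le> rho B"
proof -
  have "v \<in> carrier_vec d" "v \<noteq> 0\<^sub>v d" using v B unfolding eigenvector_def by auto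
  then obtain t where "t < d" by (rule nonzero_vec_index)
  moreover have "e \<in> spectrum (map_mat complex_of_real B)"
    using v by (auto simp: spectrum_def eigenvalue_def)
  ultimately show ?thesis unfolding rho_def
    using spectral_radius_mem_max(2)[of "map_mat complex_of_real B" d] B by auto
qed

lemma rho_attained:
  assumes "B \<in> carrier_mat d d" "0 < d"
  obtains e v where "eigenvector (map_mat complex_of_real B) v e" "norm e = rho B"
proof -
  have "spectral_radius (map_mat complex_of_real B) \<in> norm ` spectrum (map_mat complex_of_real B)"
    by (rule spectral_radius_mem_max(1)[of _ d]) (use assms in auto)
  then show ?thesis using that unfolding rho_def spectrum_def eigenvalue_def by auto
qed

lemma eigenvalue_le_subinvariant:
  assumes B: "nonneg_mat d B"
    and y: "y \<in> carrier_vec d" "\<forall>t<d. 0 < y $ t" "B *\<^sub>v y \<le> c \<cdot>\<^sub>v y"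
    and v: "eigenvector (map_mat complex_of_real B) v e"
  shows "norm e \<le> c"
proof -
  have Bc: "B \<in> carrier_mat d d" using B by (rule nonneg_mat_carrier)
  have v: "v \<in> carrier_vec d" "v \<noteq> 0\<^sub>v d" "map_mat complex_of_real B *\<^sub>v v = e \<cdot>\<^sub>v v"
    using v Bc unfolding eigenvector_def by auto
  obtain t0 where t0: "t0 < d" "v $ t0 \<noteq> 0" using nonzero_vec_index[OF v(1,2)] .
  obtain s where s: "s < d" "\<And>t. t < d \<Longrightarrow> norm (v $ t) / y $ t \<le> norm (v $ s) / y $ s"
    using ex_lessThan_arg_max[of d "\<lambda>t. norm (v $ t) / y $ t"] t0(1) by auto
  define m where "m = norm (v $ s) / y $ s"
  have "0 < norm (v $ t0) / y $ t0" using t0 y(2) by auto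
  then have m_pos: "0 < m" using s(2)[OF t0(1)] by (simp add: m_def)
  have v_le: "norm (v $ t) \<le> m * y $ t" if "t < d" for t
    using s(2)[OF that] y(2) that by (simp add: m_def divide_le_eq)
  have "norm e * norm (v $ s) = norm ((map_mat complex_of_real B *\<^sub>v v) $ s)"
    using v(1,3) s(1) by (simp add: norm_mult)
  also have "\<dots> = norm (\<Sum>t<d. complex_of_real (B $$ (s,t)) * v $ t)"
    using mult_mat_vec_index_sum[of "map_mat complex_of_real B" d d v s] Bc v(1) s(1) by simp
  also have "\<dots> \<le> (\<Sum>t<d. B $$ (s,t) * norm (v $ t))"
    using B s(1) by (intro order_trans[OF norm_sum] sum_mono) (simp add: norm_mult nonneg_mat_def)
  also have "\<dots> \<le> (\<Sum>t<d. B $$ (s,t) * (m * y $ t))"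
    using v_le B s(1) by (intro sum_mono mult_left_mono) (auto simp: nonneg_mat_def)
  also have "\<dots> = m * (B *\<^sub>v y) $ s"
    by (simp add: mult_mat_vec_index_sum[OF Bc y(1) s(1)] sum_distrib_left algebra_simps)
  also have "\<dots> \<le> m * (c * y $ s)"
    using y(1,3) s(1) m_pos by (intro mult_left_mono) (auto simp: less_eq_vec_def)
  also have "\<dots> = c * norm (v $ s)" using y(2)[rule_format, OF s(1)] by (simp add: m_def)
  finally have "norm e * norm (v $ s) \<le> c * norm (v $ s)" .
  moreover have "0 < norm (v $ s)" using m_pos y(2) s(1) by (simp add: m_def zero_less_divide_iff)
  ultimately show ?thesis by simp
qed

lemma rho_le_subinvariant:
  assumes "nonneg_mat d B" "0 < d"
    and "y \<in> carrier_vec d" "\<forall>t<d. 0 < y $ t" "B *\<^sub>v y \<le> c \<cdot>\<^sub>v y"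
  shows "rho B \<le> c"
proof -
  have "B \<in> carrier_mat d d" using assms(1) by (rule nonneg_mat_carrier)
  then obtain e v where "eigenvector (map_mat complex_of_real B) v e" "norm e = rho B"
    using assms(2) by (rule rho_attained)
  then show ?thesis using eigenvalue_le_subinvariant assms(1,3-5) by metis
qed

lemma rho_pos_eigenvector:
  assumes B: "nonneg_mat d B" and d: "0 < d"
    and y: "y \<in> carrier_vec d" "\<forall>t<d. 0 < y $ t" "B *\<^sub>v y = c \<cdot>\<^sub>v y"
  shows "rho B = c"
proof (rule antisym)
  show "rho B \<le> c" using rho_le_subinvariant[OF B d y(1,2)] y(3) by simp
  have Bc: "B \<in> carrier_mat d d" using B by (rule nonneg_mat_carrier)
  have "map_mat complex_of_real B *\<^sub>v map_vec complex_of_real y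
      = complex_of_real c \<cdot>\<^sub>v map_vec complex_of_real y"
    using of_real_hom.mult_mat_vec_hom[OF Bc y(1), symmetric] y(3) by (simp add: of_real_hom.vec_hom_smult)
  moreover have "map_vec complex_of_real y \<noteq> 0\<^sub>v d"
    using y(1,2) d by (metis index_map_vec(1) index_zero_vec(1) carrier_vecD of_real_eq_0_iff less_irrefl)
  ultimately have "eigenvector (map_mat complex_of_real B) (map_vec complex_of_real y) (complex_of_real c)"
    using Bc y(1) by (simp add: eigenvector_def)
  from rho_ge_eigenvalue[OF Bc this] show "c \<le> rho B" by simp
qed

lemma pow_mat_closed:
  fixes B :: "'a::semiring_1 mat" and b :: "'b::monoid_mult"
  assumes "B \<in> carrier_mat d d" "Q (1\<^sub>m d) 1" "\<And>B b C c. Q B b \<Longrightarrow> Q C c \<Longrightarrow> Q (B * C) (b * c)"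
    and "Q B b"
  shows "Q (B ^\<^sub>m m) (b ^ m)"
proof (induction m)
  case (Suc m)
  then have "Q (B ^\<^sub>m m * B) (b ^ m * b)" using assms(3,4) by blast
  then show ?case by (simp only: pow_mat.simps(2) power_Suc2)
qed (use assms in simp)

lemma mpow_closed:
  fixes lam :: "nat \<Rightarrow> 'b::comm_monoid_mult"
  assumes carrier: "\<And>i. i < k \<Longrightarrow> A i \<in> carrier_mat d d"
    and one: "Q (1\<^sub>m d) 1" and mult: "\<And>B b C c. Q B b \<Longrightarrow> Q C c \<Longrightarrow> Q (B * C) (b * c)"
    and gen: "\<And>i. i < k \<Longrightarrow> Q (A i) (lam i)"
  shows "Q (mpow d k A n) (\<Prod>i<k. lam i ^ n i)"
proof -
  have "Q (foldr (\<lambda>i M. A i ^\<^sub>m n i * M) xs (1\<^sub>m d)) (\<Prod>i\<leftarrow>xs. lam i ^ n i)"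
    if "set xs \<subseteq> {..<k}" for xs
    using that by (induction xs) (auto intro: one mult pow_mat_closed carrier gen)
  from this[of "[0..<k]"] show ?thesis
    by (simp add: mpow_def prod.distinct_set_conv_list[symmetric] atLeast0LessThan)
qed

lemma mpow_carrier: "\<forall>i<k. A i \<in> carrier_mat d d \<Longrightarrow> mpow d k A n \<in> carrier_mat d d"
  by (rule mpow_closed[where Q = "\<lambda>B _. B \<in> carrier_mat d d" and lam = "\<lambda>_. 1"]) auto

lemma mpow_nonneg: "\<forall>i<k. nonneg_mat d (A i) \<Longrightarrow> nonneg_mat d (mpow d k A n)"
  by (rule mpow_closed[where Q = "\<lambda>B _. nonneg_mat d B" and lam = "\<lambda>_. 1"])
    (auto intro: nonneg_mat_mult nonneg_mat_one nonneg_mat_carrier)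

lemma mpow_commute:
  assumes A: "\<forall>i<k. A i \<in> carrier_mat d d" and C: "C \<in> carrier_mat d d"
    and comm: "\<forall>i<k. C * A i = A i * C"
  shows "C * mpow d k A n = mpow d k A n * C"
proof -
  have "mpow d k A n \<in> carrier_mat d d \<and> C * mpow d k A n = mpow d k A n * C"
  proof (rule mpow_closed[where Q = "\<lambda>B _. B \<in> carrier_mat d d \<and> C * B = B * C" and lam = "\<lambda>_. 1"])
    fix B B' :: "real mat" and b b' :: real
    assume B: "B \<in> carrier_mat d d \<and> C * B = B * C" and B': "B' \<in> carrier_mat d d \<and> C * B' = B' * C"
    then have Bc: "B \<in> carrier_mat d d" "B' \<in> carrier_mat d d" by auto
    have "C * (B * B') = (B * C) * B'" using assoc_mult_mat[OF C Bc, symmetric] B by simp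
    also have "\<dots> = B * (B' * C)" using assoc_mult_mat[OF Bc(1) C Bc(2)] B' by simp
    also have "\<dots> = (B * B') * C" using assoc_mult_mat[OF Bc C, symmetric] .
    finally show "B * B' \<in> carrier_mat d d \<and> C * (B * B') = B * B' * C" using Bc by simp
  qed (use A C comm in simp_all)
  then show ?thesis ..
qed

lemma mpow_mult_vec_eigen:
  assumes A: "\<forall>i<k. A i \<in> carrier_mat d d" and u: "u \<in> carrier_vec d"
    and eig: "\<forall>i<k. A i *\<^sub>v u = \<nu> i \<cdot>\<^sub>v u"
  shows "mpow d k A n *\<^sub>v u = (\<Prod>i<k. \<nu> i ^ n i) \<cdot>\<^sub>v u"
proof -
  have "mpow d k A n \<in> carrier_mat d d \<and> mpow d k A n *\<^sub>v u = (\<Prod>i<k. \<nu> i ^ n i) \<cdot>\<^sub>v u"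
  proof (rule mpow_closed[where Q = "\<lambda>B b. B \<in> carrier_mat d d \<and> B *\<^sub>v u = b \<cdot>\<^sub>v u"])
    fix B C :: "real mat" and b c :: real
    assume "B \<in> carrier_mat d d \<and> B *\<^sub>v u = b \<cdot>\<^sub>v u" "C \<in> carrier_mat d d \<and> C *\<^sub>v u = c \<cdot>\<^sub>v u"
    then have B: "B \<in> carrier_mat d d" "B *\<^sub>v u = b \<cdot>\<^sub>v u" and C: "C \<in> carrier_mat d d" "C *\<^sub>v u = c \<cdot>\<^sub>v u"
      by auto
    have "(B * C) *\<^sub>v u = B *\<^sub>v (c \<cdot>\<^sub>v u)" using B(1) C u by simp
    also have "\<dots> = (b * c) \<cdot>\<^sub>v u" using B u by (simp add: mult_mat_vec smult_smult_assoc mult.commute)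
    finally show "B * C \<in> carrier_mat d d \<and> (B * C) *\<^sub>v u = (b * c) \<cdot>\<^sub>v u" using B(1) C(1) by simp
  qed (use A u eig in simp_all)
  then show ?thesis ..
qed

lemma smult_vec_mono: "0 \<le> c \<Longrightarrow> v \<le> w \<Longrightarrow> c \<cdot>\<^sub>v v \<le> (c::real) \<cdot>\<^sub>v w"
  unfolding less_eq_vec_def by (auto intro: mult_left_mono)

lemma mpow_mult_vec_subinvariant:
  assumes A: "\<forall>i<k. nonneg_mat d (A i)" and u: "u \<in> carrier_vec d"
    and lam: "\<forall>i<k. 0 \<le> lam i" and sub: "\<forall>i<k. A i *\<^sub>v u \<le> lam i \<cdot>\<^sub>v u"
  shows "mpow d k A n *\<^sub>v u \<le> (\<Prod>i<k. lam i ^ n i) \<cdot>\<^sub>v u"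
proof -
  have "nonneg_mat d (mpow d k A n) \<and> 0 \<le> (\<Prod>i<k. lam i ^ n i)
    \<and> mpow d k A n *\<^sub>v u \<le> (\<Prod>i<k. lam i ^ n i) \<cdot>\<^sub>v u"
  proof (rule mpow_closed[where Q = "\<lambda>B b. nonneg_mat d B \<and> 0 \<le> b \<and> B *\<^sub>v u \<le> b \<cdot>\<^sub>v u"])
    fix B C :: "real mat" and b c :: real
    assume "nonneg_mat d B \<and> 0 \<le> b \<and> B *\<^sub>v u \<le> b \<cdot>\<^sub>v u" "nonneg_mat d C \<and> 0 \<le> c \<and> C *\<^sub>v u \<le> c \<cdot>\<^sub>v u"
    then have B: "nonneg_mat d B" "0 \<le> b" "B *\<^sub>v u \<le> b \<cdot>\<^sub>v u"
      and C: "nonneg_mat d C" "0 \<le> c" "C *\<^sub>v u \<le> c \<cdot>\<^sub>v u" by auto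
    have Bc: "B \<in> carrier_mat d d" "C \<in> carrier_mat d d" using B(1) C(1) by (auto intro: nonneg_mat_carrier)
    have "(B * C) *\<^sub>v u = B *\<^sub>v (C *\<^sub>v u)" using Bc u by simp
    also have "\<dots> \<le> B *\<^sub>v (c \<cdot>\<^sub>v u)" by (rule nonneg_mat_mult_vec_mono[OF B(1) C(3)]) (use u in simp)
    also have "\<dots> = c \<cdot>\<^sub>v (B *\<^sub>v u)" using Bc u by (simp add: mult_mat_vec)
    also have "\<dots> \<le> c \<cdot>\<^sub>v (b \<cdot>\<^sub>v u)" using C(2) B(3) by (rule smult_vec_mono)
    also have "\<dots> = (b * c) \<cdot>\<^sub>v u" by (simp add: smult_smult_assoc mult.commute)
    finally show "nonneg_mat d (B * C) \<and> 0 \<le> b * c \<and> (B * C) *\<^sub>v u \<le> (b * c) \<cdot>\<^sub>v u"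
      using B C by (simp add: nonneg_mat_mult)
  qed (use A u lam sub in \<open>auto intro: nonneg_mat_one nonneg_mat_carrier\<close>)
  then show ?thesis by blast
qed

lemma msum_carrier: "msum d k A F \<in> carrier_mat d d"
  by (simp add: msum_def)

lemma msum_mult_vec_index:
  assumes A: "\<forall>i<k. A i \<in> carrier_mat d d" and v: "v \<in> carrier_vec d" and s: "s < d"
  shows "(msum d k A F *\<^sub>v v) $ s = (\<Sum>n\<in>F. (mpow d k A n *\<^sub>v v) $ s)"
proof -
  have "(msum d k A F *\<^sub>v v) $ s = (\<Sum>t<d. (\<Sum>n\<in>F. mpow d k A n $$ (s,t)) * v $ t)"
    using mult_mat_vec_index_sum[of "msum d k A F" d d v s] v s by (simp add: msum_def)
  also have "\<dots> = (\<Sum>n\<in>F. \<Sum>t<d. mpow d k A n $$ (s,t) * v $ t)"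
    by (simp add: sum_distrib_right sum.swap[of _ "{..<d}"])
  also have "\<dots> = (\<Sum>n\<in>F. (mpow d k A n *\<^sub>v v) $ s)"
    using mult_mat_vec_index_sum[OF mpow_carrier[OF A] v s] by simp
  finally show ?thesis .
qed

lemma msum_mult_vec_eigen:
  assumes A: "\<forall>i<k. A i \<in> carrier_mat d d" and u: "u \<in> carrier_vec d"
    and eig: "\<forall>i<k. A i *\<^sub>v u = \<nu> i \<cdot>\<^sub>v u"
  shows "msum d k A F *\<^sub>v u = (\<Sum>n\<in>F. \<Prod>i<k. \<nu> i ^ n i) \<cdot>\<^sub>v u"
proof (rule eq_vecI)
  fix s assume "s < dim_vec ((\<Sum>n\<in>F. \<Prod>i<k. \<nu> i ^ n i) \<cdot>\<^sub>v u)"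
  then have s: "s < d" using u by simp
  show "(msum d k A F *\<^sub>v u) $ s = ((\<Sum>n\<in>F. \<Prod>i<k. \<nu> i ^ n i) \<cdot>\<^sub>v u) $ s"
    using msum_mult_vec_index[OF A u s] mpow_mult_vec_eigen[OF A u eig] u s
    by (simp add: sum_distrib_right)
qed (use u in \<open>simp add: msum_def\<close>)

lemma msum_mult_vec_subinvariant:
  assumes A: "\<forall>i<k. nonneg_mat d (A i)" and u: "u \<in> carrier_vec d"
    and lam: "\<forall>i<k. 0 \<le> lam i" and sub: "\<forall>i<k. A i *\<^sub>v u \<le> lam i \<cdot>\<^sub>v u"
  shows "msum d k A F *\<^sub>v u \<le> (\<Sum>n\<in>F. \<Prod>i<k. lam i ^ n i) \<cdot>\<^sub>v u"
proof -
  have Ac: "\<forall>i<k. A i \<in> carrier_mat d d" using A nonneg_mat_carrier by blast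
  have "(msum d k A F *\<^sub>v u) $ s \<le> (\<Sum>n\<in>F. \<Prod>i<k. lam i ^ n i) * u $ s" if s: "s < d" for s
  proof -
    have "(mpow d k A n *\<^sub>v u) $ s \<le> (\<Prod>i<k. lam i ^ n i) * u $ s" for n
      using mpow_mult_vec_subinvariant[OF A u lam sub, where n = n] u s
      by (auto simp: less_eq_vec_def)
    then show ?thesis
      unfolding msum_mult_vec_index[OF Ac u s] sum_distrib_right by (rule sum_mono)
  qed
  then show ?thesis using u unfolding less_eq_vec_def by (simp add: msum_def)
qed

lemma msum_mult_vec_commute:
  assumes A: "\<forall>i<k. A i \<in> carrier_mat d d" and C: "C \<in> carrier_mat d d"
    and comm: "\<forall>i<k. C * A i = A i * C" and v: "v \<in> carrier_vec d"
  shows "msum d k A F *\<^sub>v (C *\<^sub>v v) = C *\<^sub>v (msum d k A F *\<^sub>v v)"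
proof (rule eq_vecI)
  fix s assume "s < dim_vec (C *\<^sub>v (msum d k A F *\<^sub>v v))"
  then have s: "s < d" using C by simp
  have Cv: "C *\<^sub>v v \<in> carrier_vec d" using C v by simp
  have M: "mpow d k A n \<in> carrier_mat d d" for n using mpow_carrier[OF A] .
  have "mpow d k A n *\<^sub>v (C *\<^sub>v v) = C *\<^sub>v (mpow d k A n *\<^sub>v v)" for n
    using M[of n] C v mpow_commute[OF A C comm, of n] by (metis assoc_mult_mat_vec)
  then have "(msum d k A F *\<^sub>v (C *\<^sub>v v)) $ s = (\<Sum>n\<in>F. (C *\<^sub>v (mpow d k A n *\<^sub>v v)) $ s)"
    unfolding msum_mult_vec_index[OF A Cv s] by simp
  also have "\<dots> = (\<Sum>t<d. C $$ (s,t) * (\<Sum>n\<in>F. (mpow d k A n *\<^sub>v v) $ t))"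
    by (simp add: mult_mat_vec_index_sum[OF C mult_mat_vec_carrier[OF M v] s] sum_distrib_left
        sum.swap[of _ F])
  also have "\<dots> = (C *\<^sub>v (msum d k A F *\<^sub>v v)) $ s"
    by (simp add: mult_mat_vec_index_sum[OF C mult_mat_vec_carrier[OF msum_carrier v] s]
        msum_mult_vec_index[OF A v])
  finally show "(msum d k A F *\<^sub>v (C *\<^sub>v v)) $ s = (C *\<^sub>v (msum d k A F *\<^sub>v v)) $ s" .
qed (use C in \<open>simp add: msum_def\<close>)

lemma of_real_mat_eigen_Re_Im:
  fixes B :: "real mat"
  assumes B: "B \<in> carrier_mat n d" and z: "z \<in> carrier_vec d"
    and eig: "map_mat complex_of_real B *\<^sub>v z = complex_of_real c \<cdot>\<^sub>v z"
  shows "B *\<^sub>v map_vec Re z = c \<cdot>\<^sub>v map_vec Re z" and "B *\<^sub>v map_vec Im z = c \<cdot>\<^sub>v map_vec Im z"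
proof -
  have "B *\<^sub>v map_vec Re z = map_vec Re (map_mat complex_of_real B *\<^sub>v z)"
    using B z by (auto intro!: eq_vecI sum.cong simp: scalar_prod_def Re_sum)
  also have "\<dots> = c \<cdot>\<^sub>v map_vec Re z" unfolding eig by (auto intro!: eq_vecI)
  finally show "B *\<^sub>v map_vec Re z = c \<cdot>\<^sub>v map_vec Re z" .
  have "B *\<^sub>v map_vec Im z = map_vec Im (map_mat complex_of_real B *\<^sub>v z)"
    using B z by (auto intro!: eq_vecI sum.cong simp: scalar_prod_def Im_sum)
  also have "\<dots> = c \<cdot>\<^sub>v map_vec Im z" unfolding eig by (auto intro!: eq_vecI)
  finally show "B *\<^sub>v map_vec Im z = c \<cdot>\<^sub>v map_vec Im z" .
qed

locale commuting_PF_family =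
  fixes d k :: nat and A :: "nat \<Rightarrow> real mat" and F :: "(nat \<Rightarrow> nat) set" and x :: "real vec"
  assumes nonneg: "\<forall>i<k. nonneg_mat d (A i)"
    and nonzero: "\<forall>i<k. A i \<noteq> 0\<^sub>m d d"
    and commute: "\<forall>i<k. \<forall>j<k. A i * A j = A j * A i"
    and AF_pos: "pos_mat d (msum d k A F)"
    and PF: "unimodular_PF_eigenvector (msum d k A F) x"
begin

abbreviation AF :: "real mat" where "AF \<equiv> msum d k A F"

lemma carrier: "\<forall>i<k. A i \<in> carrier_mat d d"
  using nonneg nonneg_mat_carrier by blast

lemma AF_nonneg: "nonneg_mat d AF"
  using AF_pos by (rule pos_mat_imp_nonneg_mat)

lemma x_carrier: "x \<in> carrier_vec d"
  and x_pos: "\<forall>t<d. 0 < x $ t"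
  and AF_x: "AF *\<^sub>v x = rho AF \<cdot>\<^sub>v x"
  and norm1_x: "norm1 x = 1"
  using PF msum_carrier[of d k A F] unfolding unimodular_PF_eigenvector_def by auto

lemma dim_pos: "0 < d"
  using norm1_x x_carrier by (cases "d = 0") (auto simp: norm1_def)

lemma AF_subinvariant_collinear:
  "u \<in> carrier_vec d \<Longrightarrow> AF *\<^sub>v u \<le> rho AF \<cdot>\<^sub>v u \<Longrightarrow> \<exists>c. u = c \<cdot>\<^sub>v x"
  using pos_mat_subinvariant_collinear[OF AF_pos x_carrier x_pos AF_x] by blast

lemma A_mult_x: "\<forall>i<k. A i *\<^sub>v x = rho (A i) \<cdot>\<^sub>v x"
proof (intro allI impI)
  fix i assume i: "i < k"
  have Ai: "A i \<in> carrier_mat d d" using carrier i by blast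
  have "\<forall>j<k. A i * A j = A j * A i" using commute i by blast
  then have "AF *\<^sub>v (A i *\<^sub>v x) = rho AF \<cdot>\<^sub>v (A i *\<^sub>v x)"
    using msum_mult_vec_commute[OF carrier Ai _ x_carrier] AF_x Ai x_carrier by (simp add: mult_mat_vec)
  then obtain \<mu> where \<mu>: "A i *\<^sub>v x = \<mu> \<cdot>\<^sub>v x"
    using AF_subinvariant_collinear[of "A i *\<^sub>v x"] Ai x_carrier by auto
  moreover have "rho (A i) = \<mu>"
    using nonneg i dim_pos x_carrier x_pos \<mu> by (intro rho_pos_eigenvector) auto
  ultimately show "A i *\<^sub>v x = rho (A i) \<cdot>\<^sub>v x" by simp
qed

lemma rho_A_pos: "\<forall>i<k. 0 < rho (A i)"
proof (intro allI impI)
  fix i assume i: "i < k"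
  obtain s where "s < d" "0 < (A i *\<^sub>v x) $ s"
    using nonneg_mat_nonzero_mult_vec_pos[of d "A i" x] nonneg nonzero i x_carrier x_pos by blast
  then show "0 < rho (A i)"
    using A_mult_x i x_carrier x_pos by (auto simp: zero_less_mult_iff)
qed

lemma x_eigenvector: "\<forall>i<k. eigenvector (A i) x (rho (A i))"
  using A_mult_x carrier x_carrier x_pos dim_pos
  by (auto simp: eigenvector_def dest!: arg_cong[of _ _ "\<lambda>v. v $ 0"])

lemma rho_AF: "rho AF = (\<Sum>n\<in>F. \<Prod>i<k. rho (A i) ^ n i)"
  using msum_mult_vec_eigen[OF carrier x_carrier A_mult_x]
  by (intro rho_pos_eigenvector[OF AF_nonneg dim_pos x_carrier x_pos])

lemma AF_eq_x_if_subinvariant: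
  assumes u: "u \<in> carrier_vec d" "\<forall>t<d. 0 \<le> u $ t" "norm1 u = 1"
    and sub: "AF *\<^sub>v u \<le> rho AF \<cdot>\<^sub>v u"
  shows "u = x"
proof -
  obtain c where c: "u = c \<cdot>\<^sub>v x" using AF_subinvariant_collinear[OF u(1) sub] ..
  have "\<bar>c\<bar> = 1" using u(3) norm1_smult[OF x_carrier, of c] norm1_x c by simp
  moreover have "0 \<le> c * x $ 0" using u(2) dim_pos c x_carrier by auto
  ultimately have "c = 1" using x_pos dim_pos by (auto simp: zero_le_mult_iff)
  then show ?thesis using c x_carrier by simp
qed

lemma common_eigenvector_eq_x:
  assumes y: "y \<in> carrier_vec d" "\<forall>t<d. 0 \<le> y $ t" "norm1 y = 1"
    and eig: "\<forall>i<k. \<exists>\<mu>. eigenvector (A i) y \<mu>"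
  shows "y = x"
proof -
  obtain \<nu> where \<nu>: "\<forall>i<k. A i *\<^sub>v y = \<nu> i \<cdot>\<^sub>v y"
    using eig unfolding eigenvector_def by metis
  define L where "L = (\<Sum>n\<in>F. \<Prod>i<k. \<nu> i ^ n i)"
  have AF_y: "AF *\<^sub>v y = L \<cdot>\<^sub>v y" unfolding L_def by (rule msum_mult_vec_eigen[OF carrier y(1) \<nu>])
  have "y \<noteq> 0\<^sub>v d" using y(3) by (auto simp: norm1_def)
  then have "\<forall>t<d. 0 < y $ t" using pos_mat_subinvariant_pos[OF AF_pos y(1,2), of L] AF_y by simp
  then have "rho AF = L" by (rule rho_pos_eigenvector[OF AF_nonneg dim_pos y(1) _ AF_y])
  then show ?thesis using AF_eq_x_if_subinvariant[OF y] AF_y by simp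
qed

lemma common_rho_eigenvector_collinear:
  assumes u: "u \<in> carrier_vec d" and eig: "\<forall>i<k. A i *\<^sub>v u = rho (A i) \<cdot>\<^sub>v u"
  shows "\<exists>c. u = c \<cdot>\<^sub>v x"
  using AF_subinvariant_collinear[OF u] msum_mult_vec_eigen[OF carrier u eig] rho_AF by simp

lemma complex_common_rho_eigenvector_collinear:
  assumes z: "z \<in> carrier_vec d"
    and eig: "\<forall>i<k. map_mat complex_of_real (A i) *\<^sub>v z = complex_of_real (rho (A i)) \<cdot>\<^sub>v z"
  shows "\<exists>c. z = c \<cdot>\<^sub>v map_vec complex_of_real x"
proof -
  have "\<forall>i<k. A i *\<^sub>v map_vec Re z = rho (A i) \<cdot>\<^sub>v map_vec Re z"
    and "\<forall>i<k. A i *\<^sub>v map_vec Im z = rho (A i) \<cdot>\<^sub>v map_vec Im z"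
    using of_real_mat_eigen_Re_Im[OF _ z] carrier eig by blast+
  then obtain a b where a: "map_vec Re z = a \<cdot>\<^sub>v x" and b: "map_vec Im z = b \<cdot>\<^sub>v x"
    using common_rho_eigenvector_collinear z by (meson map_carrier_vec)
  have "z = Complex a b \<cdot>\<^sub>v map_vec complex_of_real x"
  proof (rule eq_vecI)
    fix s assume "s < dim_vec (Complex a b \<cdot>\<^sub>v map_vec complex_of_real x)"
    then have s: "s < d" using x_carrier by simp
    have "Re (z $ s) = a * x $ s" "Im (z $ s) = b * x $ s"
      using arg_cong[OF a, of "\<lambda>v. v $ s"] arg_cong[OF b, of "\<lambda>v. v $ s"] z x_carrier s by auto
    then show "z $ s = (Complex a b \<cdot>\<^sub>v map_vec complex_of_real x) $ s"
      using x_carrier s by (simp add: complex_eq_iff)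
  qed (use z x_carrier in auto)
  then show ?thesis ..
qed

lemma subinvariant_vector:
  assumes y: "y \<in> carrier_vec d" "\<forall>t<d. 0 \<le> y $ t" "y \<noteq> 0\<^sub>v d"
    and lam: "\<forall>i<k. 0 \<le> lam i" and sub: "\<forall>i<k. \<forall>s<d. (A i *\<^sub>v y) $ s \<le> lam i * y $ s"
  shows "\<forall>t<d. 0 < y $ t"
    and "\<forall>i<k. rho (A i) \<le> lam i"
    and "\<forall>i<k. lam i = rho (A i) \<Longrightarrow> norm1 y = 1 \<Longrightarrow> y = x"
proof -
  have sub: "\<forall>i<k. A i *\<^sub>v y \<le> lam i \<cdot>\<^sub>v y"
    using sub carrier y(1) by (intro allI impI less_eq_vec_iff[THEN iffD2]) auto
  have AF_y: "AF *\<^sub>v y \<le> (\<Sum>n\<in>F. \<Prod>i<k. lam i ^ n i) \<cdot>\<^sub>v y"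
    by (rule msum_mult_vec_subinvariant[OF nonneg y(1) lam sub])
  show y_pos: "\<forall>t<d. 0 < y $ t" using pos_mat_subinvariant_pos[OF AF_pos y AF_y] by blast
  show "\<forall>i<k. rho (A i) \<le> lam i"
    using rho_le_subinvariant[OF _ dim_pos y(1) y_pos] nonneg sub by blast
  show "y = x" if "\<forall>i<k. lam i = rho (A i)" "norm1 y = 1"
  proof -
    have "(\<Sum>n\<in>F. \<Prod>i<k. lam i ^ n i) = rho AF" unfolding rho_AF using that(1) by simp
    then show ?thesis using AF_eq_x_if_subinvariant[OF y(1,2) that(2)] AF_y by simp
  qed
qed

lemma rho_mpow: "rho (mpow d k A n) = (\<Prod>i<k. rho (A i) ^ n i)"
  using mpow_mult_vec_eigen[OF carrier x_carrier A_mult_x]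
  by (rule rho_pos_eigenvector[OF mpow_nonneg[OF nonneg] dim_pos x_carrier x_pos])

end

theorem proposition3p1:
  fixes d k :: nat and A :: "nat \<Rightarrow> real mat" and F :: "(nat \<Rightarrow> nat) set" and x :: "real vec"
  assumes carr: "\<forall>i<k. A i \<in> carrier_mat d d"
    and nonneg: "\<forall>i<k. \<forall>s<d. \<forall>t<d. A i $$ (s,t) \<ge> 0"
    and nonzero: "\<forall>i<k. A i \<noteq> 0\<^sub>m d d"
    and comm: "\<forall>i<k. \<forall>j<k. A i * A j = A j * A i"
    and irr: "irreducible_family d k A"
    and F: "finite F" "F \<subseteq> nvecs k"
    and AF_pos: "\<forall>s<d. \<forall>t<d. msum d k A F $$ (s,t) > 0"
    and x: "unimodular_PF_eigenvector (msum d k A F) x"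
  shows
    "(x \<in> carrier_vec d \<and> (\<forall>s<d. x $ s \<ge> 0) \<and> norm1 x = 1 \<and>
        (\<forall>i<k. \<exists>\<mu>. eigenvector (A i) x \<mu>) \<and>
        (\<forall>y. y \<in> carrier_vec d \<and> (\<forall>s<d. y $ s \<ge> 0) \<and> norm1 y = 1 \<and>
             (\<forall>i<k. \<exists>\<mu>. eigenvector (A i) y \<mu>) \<longrightarrow> y = x))
     \<and> (\<forall>i<k. A i *\<^sub>v x = rho (A i) \<cdot>\<^sub>v x \<and> rho (A i) > 0)
     \<and> (\<forall>z. z \<in> carrier_vec d \<and>
            (\<forall>i<k. map_mat complex_of_real (A i) *\<^sub>v z = complex_of_real (rho (A i)) \<cdot>\<^sub>v z)
            \<longrightarrow> (\<exists>c::complex. z = c \<cdot>\<^sub>v map_vec complex_of_real x))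
     \<and> (\<forall>y (lam::nat \<Rightarrow> real). y \<in> carrier_vec d \<and> (\<forall>s<d. y $ s \<ge> 0) \<and> y \<noteq> 0\<^sub>v d \<and>
            (\<forall>i<k. lam i \<ge> 0) \<and> (\<forall>i<k. \<forall>s<d. (A i *\<^sub>v y) $ s \<le> lam i * y $ s) \<longrightarrow>
            (\<forall>s<d. y $ s > 0) \<and> (\<forall>i<k. lam i \<ge> rho (A i)) \<and>
            ((\<forall>i<k. lam i = rho (A i)) \<and> norm1 y = 1 \<longrightarrow> y = x))
     \<and> (\<forall>n\<in>nvecs k. rho (mpow d k A n) = (\<Prod>i<k. rho (A i) ^ n i) \<and>
            (\<Prod>i<k. rho (A i) ^ n i) > 0)"
proof -
  interpret commuting_PF_family d k A F x
    using carr nonneg nonzero comm AF_pos x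
    by unfold_locales (auto simp: nonneg_mat_def pos_mat_def msum_carrier)
  show ?thesis
  proof (intro conjI)
    show "\<forall>s<d. x $ s \<ge> 0" using x_pos by (simp add: less_imp_le)
    show "\<forall>i<k. \<exists>\<mu>. eigenvector (A i) x \<mu>" using x_eigenvector by blast
    show "\<forall>i<k. A i *\<^sub>v x = rho (A i) \<cdot>\<^sub>v x \<and> rho (A i) > 0" using A_mult_x rho_A_pos by blast
    show "\<forall>n\<in>nvecs k. rho (mpow d k A n) = (\<Prod>i<k. rho (A i) ^ n i) \<and> (\<Prod>i<k. rho (A i) ^ n i) > 0"
      using rho_mpow rho_A_pos by (auto intro!: prod_pos)
    show "\<forall>y. y \<in> carrier_vec d \<and> (\<forall>s<d. y $ s \<ge> 0) \<and> norm1 y = 1 \<and>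
             (\<forall>i<k. \<exists>\<mu>. eigenvector (A i) y \<mu>) \<longrightarrow> y = x"
      using common_eigenvector_eq_x by blast
    show "\<forall>z. z \<in> carrier_vec d \<and>
            (\<forall>i<k. map_mat complex_of_real (A i) *\<^sub>v z = complex_of_real (rho (A i)) \<cdot>\<^sub>v z)
            \<longrightarrow> (\<exists>c::complex. z = c \<cdot>\<^sub>v map_vec complex_of_real x)"
      using complex_common_rho_eigenvector_collinear by blast
    show "\<forall>y lam. y \<in> carrier_vec d \<and> (\<forall>s<d. y $ s \<ge> 0) \<and> y \<noteq> 0\<^sub>v d \<and>
            (\<forall>i<k. lam i \<ge> 0) \<and> (\<forall>i<k. \<forall>s<d. (A i *\<^sub>v y) $ s \<le> lam i * y $ s) \<longrightarrow>
            (\<forall>s<d. y $ s > 0) \<and> (\<forall>i<k. lam i \<ge> rho (A i)) \<and>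
            ((\<forall>i<k. lam i = rho (A i)) \<and> norm1 y = 1 \<longrightarrow> y = x)"
      using subinvariant_vector by blast
  qed (fact x_carrier norm1_x)+
qed

end
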